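(* Let $G$ be a bipartite TRVG with a rectangle representation in which the rectangles of one part are $g_1,\dots,g_p$ ($p\ge 1$) and the rectangles of the other part are $r_1,\dots,r_q$. If, for each $i\in\{1,\dots,p\}$, $g_i$ sees exactly $\alpha_i$ of the rectangles $r_1,\dots,r_q$ horizontally, then \[ q\ \ge\ \alpha_1+\alpha_2+\cdots+\alpha_p-(p-1). \]
   Context: A graph $G$ is a transparent rectangle visibility graph (TRVG) if its vertices can be represented by a collection of pairwise non-overlapping rectangles in the plane whose sides are parallel to the coordinate axes, one per vertex, such that two distinct vertices are adjacent if and only if there is a horizontal or a vertical line intersecting the interiors of both of their rectangles (other rectangles do not block visibility). Two rectangles see each other horizontally if some horizontal line meets the interiors of both. *)

theory Defs
  imports Main "HOL-Library.Product_Order" Complex_Main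
begin

datatype rect = Rect (x1: real) (x2: real) (y1: real) (y2: real)

definition valid_rect :: "rect \<Rightarrow> bool" where
  "valid_rect R \<longleftrightarrow> x1 R < x2 R \<and> y1 R < y2 R"

definition rect_interior :: "rect \<Rightarrow> (real \<times> real) set" where
  "rect_interior R = {(x, y). x1 R < x \<and> x < x2 R \<and> y1 R < y \<and> y < y2 R}"

definition non_overlapping :: "rect \<Rightarrow> rect \<Rightarrow> bool" where
  "non_overlapping A B \<longleftrightarrow> rect_interior A \<inter> rect_interior B = {}"

definition sees_h :: "rect \<Rightarrow> rect \<Rightarrow> bool" where
  "sees_h A B \<longleftrightarrow> (\<exists>y. (\<exists>x. (x, y) \<in> rect_interior A) \<and> (\<exists>x. (x, y) \<in> rect_interior B))"

definition sees_v :: "rect \<Rightarrow> rect \<Rightarrow> bool" where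
  "sees_v A B \<longleftrightarrow> (\<exists>x. (\<exists>y. (x, y) \<in> rect_interior A) \<and> (\<exists>y. (x, y) \<in> rect_interior B))"

definition trvg_adj :: "rect \<Rightarrow> rect \<Rightarrow> bool" where
  "trvg_adj A B \<longleftrightarrow> sees_h A B \<or> sees_v A B"

end

theory Submission
  imports Defs
begin

text \<open>Two valid rectangles see each other horizontally exactly when their y-intervals
overlap, so the counted pairs are the edges of an overlap graph between two families of
open intervals, each family pairwise non-overlapping. Charge each overlapping pair to the
member whose right end comes first (ties to the g-side). Two pairs charged to the same
interval u give two intervals of the other family that both start before and end no
earlier than the right end of u, so they overlap; hence the charging is injective.
Moreover some interval attaining the largest right end is never charged (one from the
r-side if there is such, otherwise one from the g-side), so there are at most p + q - 1
pairs.\<close>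

definition overlaps :: "real \<times> real \<Rightarrow> real \<times> real \<Rightarrow> bool" where
  "overlaps u v \<longleftrightarrow> max (fst u) (fst v) < min (snd u) (snd v)"

lemma overlaps_sym: "overlaps u v \<longleftrightarrow> overlaps v u"
  by (auto simp: overlaps_def)

lemma overlaps_past_right_end:
  assumes "overlaps u v" "overlaps u w" "snd u \<le> snd v" "snd u \<le> snd w"
  shows "overlaps v w"
  using assms by (auto simp: overlaps_def)

lemma sees_h_iff_overlaps:
  assumes "valid_rect A" "valid_rect B"
  shows "sees_h A B \<longleftrightarrow> overlaps (y1 A, y2 A) (y1 B, y2 B)"
proof
  assume "sees_h A B"
  then show "overlaps (y1 A, y2 A) (y1 B, y2 B)"
    unfolding sees_h_def rect_interior_def overlaps_def by auto
next
  assume "overlaps (y1 A, y2 A) (y1 B, y2 B)"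
  then have "max (y1 A) (y1 B) < min (y2 A) (y2 B)"
    by (simp add: overlaps_def)
  moreover define y where "y = (max (y1 A) (y1 B) + min (y2 A) (y2 B)) / 2"
  ultimately have "((x1 A + x2 A) / 2, y) \<in> rect_interior A"
    and "((x1 B + x2 B) / 2, y) \<in> rect_interior B"
    using assms unfolding rect_interior_def valid_rect_def by auto
  then show "sees_h A B"
    unfolding sees_h_def by blast
qed

definition charge :: "('i \<Rightarrow> real \<times> real) \<Rightarrow> ('j \<Rightarrow> real \<times> real) \<Rightarrow> 'i \<times> 'j \<Rightarrow> 'i + 'j" where
  "charge a b = (\<lambda>(i, j). if snd (a i) \<le> snd (b j) then Inl i else Inr j)"

lemma inj_on_charge:
  assumes "pairwise (\<lambda>i i'. \<not> overlaps (a i) (a i')) I"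
    and "pairwise (\<lambda>j j'. \<not> overlaps (b j) (b j')) J"
  shows "inj_on (charge a b) (Sigma I (\<lambda>i. {j \<in> J. overlaps (a i) (b j)}))"
proof (rule inj_onI, clarify)
  fix i j i' j'
  assume "i \<in> I" "j \<in> J" "overlaps (a i) (b j)" "i' \<in> I" "j' \<in> J" "overlaps (a i') (b j')"
    and charge_eq: "charge a b (i, j) = charge a b (i', j')"
  show "i = i' \<and> j = j'"
  proof (cases "snd (a i) \<le> snd (b j)")
    case True
    with charge_eq have "i' = i" "snd (a i) \<le> snd (b j')"
      by (auto simp: charge_def split: if_splits)
    then have "overlaps (b j) (b j')"
      using True \<open>overlaps (a i) (b j)\<close> \<open>overlaps (a i') (b j')\<close>
      by (auto intro: overlaps_past_right_end)
    then show ?thesis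
      using \<open>i' = i\<close> \<open>j \<in> J\<close> \<open>j' \<in> J\<close> assms(2) by (auto simp: pairwise_def)
  next
    case False
    with charge_eq have "j' = j" "snd (b j) \<le> snd (a i')"
      by (auto simp: charge_def split: if_splits)
    then have "overlaps (a i) (a i')"
      using False \<open>overlaps (a i) (b j)\<close> \<open>overlaps (a i') (b j')\<close>
        overlaps_past_right_end[of "b j" "a i" "a i'"]
      by (simp add: overlaps_sym)
    then show ?thesis
      using \<open>j' = j\<close> \<open>i \<in> I\<close> \<open>i' \<in> I\<close> assms(1) by (auto simp: pairwise_def)
  qed
qed

lemma charge_not_onto:
  assumes "finite I" "finite J" "I \<noteq> {} \<or> J \<noteq> {}"
  shows "\<exists>z \<in> I <+> J. z \<notin> charge a b ` (I \<times> J)"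
proof -
  define M where "M = Max (snd ` a ` I \<union> snd ` b ` J)"
  have le_M: "\<And>i. i \<in> I \<Longrightarrow> snd (a i) \<le> M" "\<And>j. j \<in> J \<Longrightarrow> snd (b j) \<le> M"
    using assms(1,2) by (auto simp: M_def)
  have "M \<in> snd ` a ` I \<union> snd ` b ` J"
    unfolding M_def using assms by (intro Max_in) auto
  show ?thesis
  proof (cases "\<exists>j \<in> J. snd (b j) = M")
    case True
    then obtain j where "j \<in> J" "snd (b j) = M" by blast
    then have "Inr j \<notin> charge a b ` (I \<times> J)"
      using le_M(1) by (auto simp: charge_def split: if_splits)
    with \<open>j \<in> J\<close> show ?thesis by blast
  next
    case False
    then obtain i where "i \<in> I" "snd (a i) = M"
      using \<open>M \<in> snd ` a ` I \<union> snd ` b ` J\<close> by auto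
    then have "Inl i \<notin> charge a b ` (I \<times> J)"
      using False le_M(2) by (force simp: charge_def split: if_splits)
    with \<open>i \<in> I\<close> show ?thesis by blast
  qed
qed

lemma card_overlapping_pairs_less:
  assumes "finite I" "finite J" "I \<noteq> {} \<or> J \<noteq> {}"
    and "pairwise (\<lambda>i i'. \<not> overlaps (a i) (a i')) I"
    and "pairwise (\<lambda>j j'. \<not> overlaps (b j) (b j')) J"
  shows "card (Sigma I (\<lambda>i. {j \<in> J. overlaps (a i) (b j)})) < card I + card J"
proof -
  let ?E = "Sigma I (\<lambda>i. {j \<in> J. overlaps (a i) (b j)})"
  obtain z where z: "z \<in> I <+> J" "z \<notin> charge a b ` (I \<times> J)"
    using charge_not_onto[OF assms(1-3)] by blast
  have "charge a b ` ?E \<subseteq> I <+> J"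
    by (auto simp: charge_def)
  with z have "charge a b ` ?E \<subset> I <+> J"
    by blast
  then have "card (charge a b ` ?E) < card (I <+> J)"
    using assms(1,2) by (intro psubset_card_mono) auto
  then show ?thesis
    using inj_on_charge[OF assms(4,5)] assms(1,2) by (simp add: card_image card_Plus)
qed

theorem lemma2:
  fixes g r :: "nat \<Rightarrow> rect" and p q :: nat
  assumes "p \<ge> 1"
    and "\<forall>i\<in>{1..p}. valid_rect (g i)"
    and "\<forall>j\<in>{1..q}. valid_rect (r j)"
    and "\<forall>i\<in>{1..p}. \<forall>i'\<in>{1..p}. i \<noteq> i' \<longrightarrow> non_overlapping (g i) (g i')"
    and "\<forall>j\<in>{1..q}. \<forall>j'\<in>{1..q}. j \<noteq> j' \<longrightarrow> non_overlapping (r j) (r j')"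
    and "\<forall>i\<in>{1..p}. \<forall>j\<in>{1..q}. non_overlapping (g i) (r j)"
    and "\<forall>i\<in>{1..p}. \<forall>i'\<in>{1..p}. i \<noteq> i' \<longrightarrow> \<not> trvg_adj (g i) (g i')"
    and "\<forall>j\<in>{1..q}. \<forall>j'\<in>{1..q}. j \<noteq> j' \<longrightarrow> \<not> trvg_adj (r j) (r j')"
  shows "int q \<ge> (\<Sum>i=1..p. int (card {j\<in>{1..q}. sees_h (g i) (r j)})) - (int p - 1)"
proof -
  let ?a = "\<lambda>i. (y1 (g i), y2 (g i))" and ?b = "\<lambda>j. (y1 (r j), y2 (r j))"
  have sees_h_g_r: "sees_h (g i) (r j) \<longleftrightarrow> overlaps (?a i) (?b j)"
    if "i \<in> {1..p}" "j \<in> {1..q}" for i j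
    using that assms(2,3) by (simp add: sees_h_iff_overlaps)
  have "pairwise (\<lambda>i i'. \<not> overlaps (?a i) (?a i')) {1..p}"
    using assms(2,7) by (auto simp: pairwise_def trvg_adj_def sees_h_iff_overlaps)
  moreover have "pairwise (\<lambda>j j'. \<not> overlaps (?b j) (?b j')) {1..q}"
    using assms(3,8) by (auto simp: pairwise_def trvg_adj_def sees_h_iff_overlaps)
  ultimately have "card (Sigma {1..p} (\<lambda>i. {j \<in> {1..q}. overlaps (?a i) (?b j)})) < p + q"
    using card_overlapping_pairs_less[of "{1..p}" "{1..q}"] assms(1) by simp
  moreover have "(\<Sum>i=1..p. card {j \<in> {1..q}. sees_h (g i) (r j)})
      = (\<Sum>i=1..p. card {j \<in> {1..q}. overlaps (?a i) (?b j)})"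
  proof (rule sum.cong [OF refl])
    fix i assume "i \<in> {1..p}"
    then have "{j \<in> {1..q}. sees_h (g i) (r j)} = {j \<in> {1..q}. overlaps (?a i) (?b j)}"
      using sees_h_g_r by blast
    then show "card {j \<in> {1..q}. sees_h (g i) (r j)} = card {j \<in> {1..q}. overlaps (?a i) (?b j)}"
      by (rule arg_cong)
  qed
  ultimately have "(\<Sum>i=1..p. card {j \<in> {1..q}. sees_h (g i) (r j)}) < p + q"
    by simp
  then have "int (\<Sum>i=1..p. card {j \<in> {1..q}. sees_h (g i) (r j)}) < int p + int q"
    by linarith
  then show ?thesis
    by (simp add: of_nat_sum)
qed

end
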